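(* Let $m$ be even and $n\in\mathbf{N}$. Let $q:M^{(m^n)}\to H^{(m^n)}$ be the homomorphism of $\mathbf{Z}S_{mn}$-modules sending an $(m^n)$-tabloid to the set partition whose sets are the rows of the tabloid. Then the Specht module $S^{(m^n)}\subseteq M^{(m^n)}$ is not contained in the kernel of $q$.
   Context: $M^{(m^n)}$ is the Young permutation $\mathbf{Z}S_{mn}$-module with basis the $(m^n)$-tabloids (tableaux of shape $(m^n)$ with entries a fixed $mn$-set, rows unordered). $H^{(m^n)}$ is the permutation $\mathbf{Z}S_{mn}$-module with basis the set partitions of the same $mn$-set into $n$ sets each of size $m$. $S^{(m^n)}$ is the Specht module, the $\mathbf{Z}$-span of the polytabloids $e_t=\{t\}\sum_{\tau\in C(t)}\mathrm{sgn}(\tau)\tau$, $C(t)$ the column stabilizer of $t$. *)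

theory Defs
  imports "HOL-Combinatorics.Combinatorics"
begin

text \<open>The fixed mn-set is {0..<m*n}. A tableau of shape (m^n) is a bijection from the
cells {..<n} x {..<m} (row i, column j) onto {..<m*n}, normalised to 0 off the cells.\<close>

definition tableaux :: "nat \<Rightarrow> nat \<Rightarrow> (nat \<times> nat \<Rightarrow> nat) set" where
  "tableaux m n = {t. bij_betw t ({..<n} \<times> {..<m}) {..<m*n} \<and>
      (\<forall>p. p \<notin> {..<n} \<times> {..<m} \<longrightarrow> t p = 0)}"

definition tabloid :: "nat \<Rightarrow> nat \<Rightarrow> (nat \<times> nat \<Rightarrow> nat) \<Rightarrow> (nat \<Rightarrow> nat set)" where
  "tabloid m n t = (\<lambda>i. if i < n then t ` ({i} \<times> {..<m}) else {})"

definition tabloids :: "nat \<Rightarrow> nat \<Rightarrow> (nat \<Rightarrow> nat set) set" where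
  "tabloids m n = tabloid m n ` tableaux m n"

definition col_stab :: "nat \<Rightarrow> nat \<Rightarrow> (nat \<times> nat \<Rightarrow> nat) \<Rightarrow> (nat \<Rightarrow> nat) set" where
  "col_stab m n t = {\<tau>. \<tau> permutes {..<m*n} \<and>
      (\<forall>j<m. \<tau> ` (t ` ({..<n} \<times> {j})) = t ` ({..<n} \<times> {j}))}"

text \<open>Elements of M^(m^n) are integer-valued functions on tabloids (coefficients w.r.t.
the tabloid basis). The polytabloid e_t = sum over C(t) of sgn(tau) {tau t}.\<close>
definition polytabloid :: "nat \<Rightarrow> nat \<Rightarrow> (nat \<times> nat \<Rightarrow> nat) \<Rightarrow> ((nat \<Rightarrow> nat set) \<Rightarrow> int)" where
  "polytabloid m n t = (\<lambda>T. \<Sum>\<tau>\<in>col_stab m n t.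
      if tabloid m n (\<tau> \<circ> t) = T then sign \<tau> else 0)"

definition specht :: "nat \<Rightarrow> nat \<Rightarrow> ((nat \<Rightarrow> nat set) \<Rightarrow> int) set" where
  "specht m n = {x. \<exists>F c. finite F \<and> F \<subseteq> tableaux m n \<and>
      x = (\<lambda>T. \<Sum>t\<in>F. c t * polytabloid m n t T)}"

definition qmap :: "nat \<Rightarrow> nat \<Rightarrow> ((nat \<Rightarrow> nat set) \<Rightarrow> int) \<Rightarrow> (nat set set \<Rightarrow> int)" where
  "qmap m n x = (\<lambda>P. \<Sum>T\<in>{T \<in> tabloids m n. T ` {..<n} = P}. x T)"

end

theory Submission
  imports Defs
begin

text \<open>Let t be the row-reading tableau and P the set partition formed by its rows. The coefficient
of P in q(e_t) is the sum of sgn \<tau> over those \<tau> \<in> C(t) that permute the rows of t among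
themselves. Such a \<tau> fixes every column and moves rows as blocks, so it acts by one and the same
row permutation in each column. Pairing column 2k with column 2k+1 by an involution c that commutes
with \<tau>, we get \<tau> = e \<circ> (c \<circ> e \<circ> c), where e is \<tau> on the even columns and the identity
elsewhere; hence sgn \<tau> = sgn e * sgn e = 1 because m is even. The coefficient is therefore
the number of such \<tau>, which is positive as \<tau> = id qualifies.\<close>

lemma sign_eq_1_if_commutes_with_swapping_involution:
  assumes "finite S" and p: "p permutes S" and c: "c permutes S"
    and c_c: "\<And>x. c (c x) = x"
    and comm: "\<And>x. x \<in> S \<Longrightarrow> p (c x) = c (p x)"
    and p_A: "\<And>x. x \<in> S \<Longrightarrow> p x \<in> A \<longleftrightarrow> x \<in> A"
    and c_A: "\<And>x. x \<in> S \<Longrightarrow> c x \<in> A \<longleftrightarrow> x \<notin> A"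
  shows "sign p = 1"
proof -
  define e where "e x = (if x \<in> A then p x else x)" for x
  have p_out: "p x = x" if "x \<notin> S" for x
    using p that by (rule permutes_not_in)
  have e_S: "e permutes S"
  proof (rule bij_imp_permutes)
    have into: "e ` S \<subseteq> S"
      using permutes_in_image[OF p] by (auto simp: e_def)
    have "inj_on e S"
    proof (rule inj_onI)
      fix x y assume "x \<in> S" "y \<in> S" "e x = e y"
      then show "x = y"
        using p_A permutes_inj[OF p] by (auto simp: e_def inj_def split: if_splits)
    qed
    with into show "bij_betw e S S"
      by (simp add: bij_betw_def endo_inj_surj[OF \<open>finite S\<close>])
    show "e x = x" if "x \<notin> S" for x
      using that p_out by (simp add: e_def)
  qed
  \<comment> \<open>e acts as p on A; its conjugate by c acts as p off A.\<close>
  have "p = e \<circ> (c \<circ> e \<circ> c)"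
  proof
    fix x
    show "p x = (e \<circ> (c \<circ> e \<circ> c)) x"
    proof (cases "x \<in> S")
      case True
      then have "c x \<in> S" "p x \<in> S"
        using permutes_in_image[OF c] permutes_in_image[OF p] by auto
      then show ?thesis
        using True c_c comm p_A c_A by (auto simp: e_def)
    next
      case False
      then show ?thesis
        using p_out permutes_not_in[OF c] permutes_not_in[OF e_S] by simp
    qed
  qed
  moreover have "permutation e" "permutation c"
    using e_S c \<open>finite S\<close> permutes_imp_permutation by blast+
  ultimately have "sign p = sign e * (sign c * sign e * sign c)"
    by (simp add: sign_compose permutation_compose)
  also have "\<dots> = 1"
    by (metis mult.assoc mult.commute sign_idempotent mult_1_right)
  finally show ?thesis .
qed

definition swap_pairs :: "nat \<Rightarrow> nat \<Rightarrow> nat" where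
  "swap_pairs N x = (if x < N then if even x then Suc x else x - 1 else x)"

lemma swap_pairs_less: "even N \<Longrightarrow> x < N \<Longrightarrow> swap_pairs N x < N"
  by (auto simp: swap_pairs_def intro!: Suc_lessI)

lemma swap_pairs_swap_pairs [simp]: "even N \<Longrightarrow> swap_pairs N (swap_pairs N x) = x"
  using swap_pairs_less[of N x] by (auto simp: swap_pairs_def)

lemma swap_pairs_permutes: "even N \<Longrightarrow> swap_pairs N permutes {..<N}"
  by (rule bij_imp_permutes, rule bij_betw_byWitness[where f' = "swap_pairs N"])
    (auto simp: swap_pairs_less, simp add: swap_pairs_def)

lemma Suc_preserved_if_mod_div_preserved:
  fixes \<tau> :: "nat \<Rightarrow> nat"
  assumes mod: "\<And>x. x < N \<Longrightarrow> \<tau> x mod m = x mod m"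
    and div: "\<And>x y. x < N \<Longrightarrow> y < N \<Longrightarrow> x div m = y div m \<Longrightarrow> \<tau> x div m = \<tau> y div m"
    and "Suc x < N" "Suc (x mod m) < m"
  shows "\<tau> (Suc x) = Suc (\<tau> x)"
proof -
  have "Suc x mod m = Suc (x mod m)" "Suc x div m = x div m"
    using \<open>Suc (x mod m) < m\<close> by (simp_all add: mod_Suc div_Suc)
  with \<open>Suc x < N\<close> have "\<tau> (Suc x) div m = \<tau> x div m" "\<tau> (Suc x) mod m = Suc (\<tau> x mod m)"
    using div[of "Suc x" x] mod[of "Suc x"] mod[of x] by simp_all
  then have "\<tau> (Suc x) = \<tau> x div m * m + Suc (\<tau> x mod m)"
    by (metis div_mult_mod_eq)
  then show ?thesis by simp
qed

lemma div_less_if_less_mult: "x < m * n \<Longrightarrow> x div m < (n :: nat)"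
  by (simp add: less_mult_imp_div_less mult.commute)

lemma mod_less_if_less_mult: "x < m * n \<Longrightarrow> x mod m < (m :: nat)"
  by (cases "m = 0") auto

lemma even_mod_even_iff: "even m \<Longrightarrow> even (x mod m) \<longleftrightarrow> even (x :: nat)"
  by (metis div_mult_mod_eq even_add even_mult_iff)

lemma sign_eq_1_if_mod_div_preserved:
  fixes \<tau> :: "nat \<Rightarrow> nat"
  assumes "even m" and \<tau>: "\<tau> permutes {..<m * n}"
    and mod: "\<And>x. x < m * n \<Longrightarrow> \<tau> x mod m = x mod m"
    and div: "\<And>x y. x < m * n \<Longrightarrow> y < m * n \<Longrightarrow> x div m = y div m \<Longrightarrow> \<tau> x div m = \<tau> y div m"
  shows "sign \<tau> = 1"
proof -
  let ?N = "m * n"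
  have "even ?N" using \<open>even m\<close> by simp
  have \<tau>_less: "\<tau> x < ?N" if "x < ?N" for x
    using permutes_in_image[OF \<tau>] that by simp
  have \<tau>_even: "even (\<tau> x) \<longleftrightarrow> even x" if "x < ?N" for x
    using mod[OF that] even_mod_even_iff[OF \<open>even m\<close>, of x]
      even_mod_even_iff[OF \<open>even m\<close>, of "\<tau> x"] by simp
  have \<tau>_Suc: "\<tau> (Suc x) = Suc (\<tau> x)" if "x < ?N" "even x" for x
  proof (rule Suc_preserved_if_mod_div_preserved[OF mod div])
    show "Suc x < ?N"
      using swap_pairs_less[OF \<open>even ?N\<close> that(1)] that by (simp add: swap_pairs_def)
    have "x mod m < m" using that(1) by (rule mod_less_if_less_mult)
    moreover have "even (x mod m)" using that(2) \<open>even m\<close> even_mod_even_iff by blast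
    ultimately show "Suc (x mod m) < m"
      using \<open>even m\<close> by (metis Suc_lessI even_Suc)
  qed
  show ?thesis
  proof (rule sign_eq_1_if_commutes_with_swapping_involution[where A = "{x. even x}"])
    show "swap_pairs ?N permutes {..<?N}" using \<open>even ?N\<close> by (rule swap_pairs_permutes)
    show "\<tau> (swap_pairs ?N x) = swap_pairs ?N (\<tau> x)" if "x \<in> {..<?N}" for x
    proof (cases "even x")
      case True
      with that show ?thesis
        using \<tau>_Suc \<tau>_less \<tau>_even by (simp add: swap_pairs_def)
    next
      case False
      then obtain y where "x = Suc y" "even y" by (cases x) auto
      with that have "\<tau> x = Suc (\<tau> y)" "\<tau> x < ?N"
        using \<tau>_Suc[of y] \<tau>_less[of x] by simp_all
      with \<open>x = Suc y\<close> \<open>even y\<close> that show ?thesis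
        using \<tau>_even by (simp add: swap_pairs_def)
    qed
    show "swap_pairs ?N x \<in> {x. even x} \<longleftrightarrow> x \<notin> {x. even x}" if "x \<in> {..<?N}" for x
      using that by (auto simp: swap_pairs_def)
  qed (use \<tau> \<tau>_even \<open>even ?N\<close> in simp_all)
qed

definition row_reading_tableau :: "nat \<Rightarrow> nat \<Rightarrow> nat \<times> nat \<Rightarrow> nat" where
  "row_reading_tableau m n = (\<lambda>(i, j). if i < n \<and> j < m then i * m + j else 0)"

lemma mult_add_less_mult:
  fixes i j m n :: nat
  assumes "i < n" "j < m"
  shows "i * m + j < m * n"
proof -
  have "i * m + j < Suc i * m" using assms(2) by simp
  also have "\<dots> \<le> n * m" using assms(1) by (intro mult_right_mono) auto
  finally show ?thesis by (simp add: mult.commute)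
qed

lemma row_reading_tableau_image:
  assumes "I \<subseteq> {..<n}" "J \<subseteq> {..<m}"
  shows "row_reading_tableau m n ` (I \<times> J) = {x. x < m * n \<and> x div m \<in> I \<and> x mod m \<in> J}"
proof (intro set_eqI iffI)
  fix x assume "x \<in> row_reading_tableau m n ` (I \<times> J)"
  then obtain i j where "i \<in> I" "j \<in> J" "x = row_reading_tableau m n (i, j)"
    by blast
  moreover from this assms have "i < n" "j < m" by auto
  ultimately show "x \<in> {x. x < m * n \<and> x div m \<in> I \<and> x mod m \<in> J}"
    using mult_add_less_mult by (auto simp: row_reading_tableau_def)
next
  fix x assume x: "x \<in> {x. x < m * n \<and> x div m \<in> I \<and> x mod m \<in> J}"
  with assms have "x div m < n" "x mod m < m" by auto
  then have "x = row_reading_tableau m n (x div m, x mod m)"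
    by (simp add: row_reading_tableau_def)
  with x show "x \<in> row_reading_tableau m n ` (I \<times> J)" by blast
qed

lemma row_reading_tableau_in_tableaux: "row_reading_tableau m n \<in> tableaux m n"
proof -
  have "inj_on (row_reading_tableau m n) ({..<n} \<times> {..<m})"
  proof (rule inj_onI, clarify)
    fix i j i' j' assume "i < n" "j < m" "i' < n" "j' < m"
      and "row_reading_tableau m n (i, j) = row_reading_tableau m n (i', j')"
    then have "i * m + j = i' * m + j'" by (simp add: row_reading_tableau_def)
    then have "(i * m + j) div m = (i' * m + j') div m" "(i * m + j) mod m = (i' * m + j') mod m"
      by simp_all
    with \<open>j < m\<close> \<open>j' < m\<close> show "i = i' \<and> j = j'" by simp
  qed
  moreover have "{x. x < m * n \<and> x div m < n \<and> x mod m < m} = {..<m * n}"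
    by (auto simp: div_less_if_less_mult mod_less_if_less_mult)
  ultimately show ?thesis
    using row_reading_tableau_image[of "{..<n}" n "{..<m}" m]
    by (auto simp: tableaux_def bij_betw_def row_reading_tableau_def)
qed

lemma col_stab_row_reading_tableau_mod:
  assumes "\<tau> \<in> col_stab m n (row_reading_tableau m n)" "x < m * n"
  shows "\<tau> x mod m = x mod m"
proof -
  define j where "j = x mod m"
  let ?col = "row_reading_tableau m n ` ({..<n} \<times> {j})"
  have "j < m" using assms(2) unfolding j_def by (rule mod_less_if_less_mult)
  then have col: "?col = {y. y < m * n \<and> y mod m = j}"
    using row_reading_tableau_image[of "{..<n}" n "{j}" m] div_less_if_less_mult by auto
  have "\<tau> ` ?col = ?col" using assms(1) \<open>j < m\<close> unfolding col_stab_def by blast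
  moreover have "x \<in> ?col" using col assms(2) j_def by simp
  ultimately have "\<tau> x \<in> ?col" by blast
  with col show ?thesis by (simp add: j_def)
qed

lemma row_reading_tableau_rows_div:
  assumes rows: "tabloid m n (\<tau> \<circ> row_reading_tableau m n) ` {..<n} = tabloid m n (row_reading_tableau m n) ` {..<n}"
    and "x < m * n" "y < m * n" "x div m = y div m"
  shows "\<tau> x div m = \<tau> y div m"
proof -
  define row where "row i = {z. z < m * n \<and> z div m = i}" for i
  have row_eq: "row_reading_tableau m n ` ({i} \<times> {..<m}) = row i" if "i < n" for i
    using row_reading_tableau_image[of "{i}" n "{..<m}" m] that mod_less_if_less_mult
    by (auto simp: row_def)
  then have tabloid_row: "tabloid m n (row_reading_tableau m n) i = row i" if "i < n" for i
    using that by (simp add: tabloid_def)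
  define i where "i = x div m"
  have "i < n" using assms(2) unfolding i_def by (rule div_less_if_less_mult)
  then have "tabloid m n (\<tau> \<circ> row_reading_tableau m n) i = \<tau> ` row i"
    using row_eq[of i, symmetric] by (simp add: tabloid_def image_image)
  moreover have "tabloid m n (\<tau> \<circ> row_reading_tableau m n) i \<in> tabloid m n (row_reading_tableau m n) ` {..<n}"
    using rows \<open>i < n\<close> by blast
  ultimately obtain k where "\<tau> ` row i = row k"
    using tabloid_row by auto
  moreover have "x \<in> row i" "y \<in> row i" using assms(2-4) by (simp_all add: row_def i_def)
  ultimately have "\<tau> x \<in> row k" "\<tau> y \<in> row k" by blast+
  then show ?thesis by (simp add: row_def)
qed

lemma finite_col_stab: "finite (col_stab m n t)"
  by (rule finite_subset[OF _ finite_permutations[of "{..<m * n}"]]) (auto simp: col_stab_def)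

lemma finite_tabloids: "finite (tabloids m n)"
proof -
  let ?extend = "\<lambda>f :: nat \<Rightarrow> nat set. \<lambda>i. if i < n then f i else {}"
  have "tabloids m n \<subseteq> ?extend ` ({..<n} \<rightarrow>\<^sub>E Pow {..<m * n})"
  proof
    fix T assume "T \<in> tabloids m n"
    then obtain t where t: "t \<in> tableaux m n" "T = tabloid m n t" by (auto simp: tabloids_def)
    have "T i \<subseteq> t ` ({..<n} \<times> {..<m})" if "i < n" for i
      using that by (auto simp: t(2) tabloid_def)
    also have "t ` ({..<n} \<times> {..<m}) = {..<m * n}"
      using t(1) by (simp add: tableaux_def bij_betw_def)
    finally have "restrict T {..<n} \<in> {..<n} \<rightarrow>\<^sub>E Pow {..<m * n}"
      by auto
    moreover have "T = ?extend (restrict T {..<n})"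
      by (rule ext) (simp add: t(2) tabloid_def)
    ultimately show "T \<in> ?extend ` ({..<n} \<rightarrow>\<^sub>E Pow {..<m * n})" by blast
  qed
  then show ?thesis by (rule finite_subset) (simp add: finite_PiE)
qed

lemma qmap_polytabloid:
  "qmap m n (polytabloid m n t) P =
     (\<Sum>\<tau> \<in> {\<tau> \<in> col_stab m n t. tabloid m n (\<tau> \<circ> t) \<in> tabloids m n \<and>
                                 tabloid m n (\<tau> \<circ> t) ` {..<n} = P}. sign \<tau>)"
proof -
  let ?S = "{T \<in> tabloids m n. T ` {..<n} = P}"
  have "qmap m n (polytabloid m n t) P =
      (\<Sum>T \<in> ?S. \<Sum>\<tau> \<in> col_stab m n t. if tabloid m n (\<tau> \<circ> t) = T then sign \<tau> else 0)"
    by (simp add: qmap_def polytabloid_def)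
  also have "\<dots> = (\<Sum>\<tau> \<in> col_stab m n t. \<Sum>T \<in> ?S. if tabloid m n (\<tau> \<circ> t) = T then sign \<tau> else 0)"
    by (rule sum.swap)
  also have "\<dots> = (\<Sum>\<tau> \<in> col_stab m n t. if tabloid m n (\<tau> \<circ> t) \<in> ?S then sign \<tau> else 0)"
    using finite_tabloids by (simp add: sum.delta')
  finally show ?thesis
    using finite_col_stab by (simp add: sum.inter_filter)
qed

lemma polytabloid_in_specht: "t \<in> tableaux m n \<Longrightarrow> polytabloid m n t \<in> specht m n"
  unfolding specht_def by (intro CollectI exI[of _ "{t}"] exI[of _ "\<lambda>_. 1"]) auto

theorem lemma4p1:
  fixes m n :: nat
  assumes "even m"
  shows "\<not> specht m n \<subseteq> {x. qmap m n x = (\<lambda>_. 0)}"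
proof
  assume q_zero: "specht m n \<subseteq> {x. qmap m n x = (\<lambda>_. 0)}"
  define t where "t = row_reading_tableau m n"
  define P where "P = tabloid m n t ` {..<n}"
  define \<Gamma> where "\<Gamma> = {\<tau> \<in> col_stab m n t. tabloid m n (\<tau> \<circ> t) \<in> tabloids m n \<and>
                                       tabloid m n (\<tau> \<circ> t) ` {..<n} = P}"
  have t: "t \<in> tableaux m n" by (simp add: t_def row_reading_tableau_in_tableaux)
  then have "qmap m n (polytabloid m n t) P = 0"
    using q_zero polytabloid_in_specht by fastforce
  moreover have "sign \<tau> = 1" if "\<tau> \<in> \<Gamma>" for \<tau>
  proof (rule sign_eq_1_if_mod_div_preserved[OF assms])
    from that have \<tau>: "\<tau> \<in> col_stab m n t" and rows: "tabloid m n (\<tau> \<circ> t) ` {..<n} = P"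
      by (simp_all add: \<Gamma>_def)
    then show "\<tau> permutes {..<m * n}" by (simp add: col_stab_def)
    show "\<tau> x mod m = x mod m" if "x < m * n" for x
      using \<tau> that unfolding t_def by (rule col_stab_row_reading_tableau_mod)
    show "\<tau> x div m = \<tau> y div m" if "x < m * n" "y < m * n" "x div m = y div m" for x y
      using rows that unfolding P_def t_def by (rule row_reading_tableau_rows_div)
  qed
  then have "qmap m n (polytabloid m n t) P = int (card \<Gamma>)"
    by (simp add: qmap_polytabloid \<Gamma>_def)
  moreover have "id \<in> \<Gamma>" using t by (simp add: \<Gamma>_def P_def col_stab_def tabloids_def)
  moreover have "finite \<Gamma>" using finite_col_stab by (simp add: \<Gamma>_def)
  ultimately show False by (auto simp: card_0_eq)
qed

end
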